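(* Let $N\ge 2$ and $u>0$. For every $x$ with $0\le x<1$ there exists a neutral evolutionary model on $N$ sites (a replacement rule $p$ satisfying the fixation assumption described in the context) whose overall fixation probability $\rho=\frac{1}{B}\sum_{i=1}^N d_i\rho_i$ equals $x$. Consequently, the molecular clock rate $K=Nu\rho$ can take any value in $[0,Nu)$.
   Context: There are $N$ sites $1,\ldots,N$, each always occupied by one individual of type M (mutant) or R (resident); a state is $\mathbf{s}\in\{\mathrm{M},\mathrm{R}\}^N$. A replacement event is a pair $(R,\alpha)$ with $R\subseteq\{1,\ldots,N\}$ and $\alpha:R\to\{1,\ldots,N\}$. A replacement rule is a probability distribution $p(R,\alpha)$ on replacement events, independent of the state. The evolutionary Markov chain: at each time-step an event $(R,\alpha)$ is drawn with probability $p(R,\alpha)$ and the new state is $s_i'=s_i$ if $i\notin R$, $s_i'=s_{\alpha(i)}$ if $i\in R$. Fixation assumption: there exist a site $i$ and a finite sequence of replacement events, each of positive probability, such that if these events occur consecutively (from any initial state) every site ends up carrying the type initially at site $i$. Define $e_{ij}=\sum_{(R,\alpha):\, j\in R,\ \alpha(j)=i}p(R,\alpha)$, $b_i=\sum_j e_{ij}$, $d_i=\sum_j e_{ji}$, $B=\sum_{i,j}e_{ij}$. The site-specific fixation probability $\rho_i$ is the probability that the chain started from the state with M at site $i$ and R elsewhere is eventually absorbed in $(\mathrm{M},\ldots,\mathrm{M})$. *)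

theory Defs
  imports "HOL-Probability.Probability_Mass_Function" "HOL-Library.FuncSet"
begin

text \<open>Sites are 1..N. Types: mutant M or resident R.\<close>
datatype ityp = M | R

type_synonym state = "nat \<Rightarrow> ityp"

text \<open>A replacement event (R, alpha): R a set of sites, alpha : R -> sites,
  represented canonically as an extensional function on R.\<close>
type_synonym event = "nat set \<times> (nat \<Rightarrow> nat)"

definition sites :: "nat \<Rightarrow> nat set" where
  "sites N = {1..N}"

definition valid_event :: "nat \<Rightarrow> event \<Rightarrow> bool" where
  "valid_event N ev \<longleftrightarrow> fst ev \<subseteq> sites N \<and> snd ev \<in> fst ev \<rightarrow>\<^sub>E sites N"

definition replacement_rule :: "nat \<Rightarrow> event pmf \<Rightarrow> bool" where
  "replacement_rule N p \<longleftrightarrow> (\<forall>ev\<in>set_pmf p. valid_event N ev)"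

definition apply_event :: "event \<Rightarrow> state \<Rightarrow> state" where
  "apply_event ev s = (\<lambda>i. if i \<in> fst ev then s (snd ev i) else s i)"

definition fixation_assumption :: "nat \<Rightarrow> event pmf \<Rightarrow> bool" where
  "fixation_assumption N p \<longleftrightarrow>
     (\<exists>i\<in>sites N. \<exists>evs. set evs \<subseteq> set_pmf p \<and>
        (\<forall>s. \<forall>j\<in>sites N. fold apply_event evs s j = s i))"

definition e_weight :: "event pmf \<Rightarrow> nat \<Rightarrow> nat \<Rightarrow> real" where
  "e_weight p i j = measure_pmf.prob p {ev. j \<in> fst ev \<and> snd ev j = i}"

definition b_birth :: "nat \<Rightarrow> event pmf \<Rightarrow> nat \<Rightarrow> real" where
  "b_birth N p i = (\<Sum>j\<in>sites N. e_weight p i j)"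

definition d_death :: "nat \<Rightarrow> event pmf \<Rightarrow> nat \<Rightarrow> real" where
  "d_death N p i = (\<Sum>j\<in>sites N. e_weight p j i)"

definition B_total :: "nat \<Rightarrow> event pmf \<Rightarrow> real" where
  "B_total N p = (\<Sum>i\<in>sites N. \<Sum>j\<in>sites N. e_weight p i j)"

definition step :: "event pmf \<Rightarrow> state \<Rightarrow> state pmf" where
  "step p s = map_pmf (\<lambda>ev. apply_event ev s) p"

primrec chain :: "event pmf \<Rightarrow> nat \<Rightarrow> state \<Rightarrow> state pmf" where
  "chain p 0 s = return_pmf s"
| "chain p (Suc n) s = bind_pmf (chain p n s) (step p)"

definition all_M :: "nat \<Rightarrow> state set" where
  "all_M N = {s. \<forall>j\<in>sites N. s j = M}"

definition single_mutant :: "nat \<Rightarrow> state" where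
  "single_mutant i = (\<lambda>j. if j = i then M else R)"

text \<open>Site-specific fixation probability: probability of eventual absorption in
  all-M, i.e. the limit of the probability of being in the absorbing state all-M
  after n steps (this sequence is nondecreasing since all-M is absorbing).\<close>
definition rho_site :: "nat \<Rightarrow> event pmf \<Rightarrow> nat \<Rightarrow> real" where
  "rho_site N p i = lim (\<lambda>n. measure_pmf.prob (chain p n (single_mutant i)) (all_M N))"

definition rho_overall :: "nat \<Rightarrow> event pmf \<Rightarrow> real" where
  "rho_overall N p = (1 / B_total N p) * (\<Sum>i\<in>sites N. d_death N p i * rho_site N p i)"

end

theory Submission
  imports Defs
begin

text \<open>Only site 1 ever reproduces: with probability \<open>a\<close> it overwrites all other sites at once,
  otherwise it replaces itself. Then a mutant fixes if and only if it starts at site 1, and from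
  there it fixes surely (for \<open>a > 0\<close>), so \<open>\<rho> = d\<^sub>1 / B = (1 - a) / ((1 - a) + (N - 1) a)\<close>. As \<open>a\<close> runs
  through \<open>(0, 1]\<close> this takes every value in \<open>[0, 1)\<close>.\<close>

lemma set_pmf_chain_subset:
  assumes "t \<in> S" and "\<And>ev s. ev \<in> set_pmf p \<Longrightarrow> s \<in> S \<Longrightarrow> apply_event ev s \<in> S"
  shows "set_pmf (chain p n t) \<subseteq> S"
  by (induction n) (use assms in \<open>auto simp: step_def\<close>)

lemma rho_site_eq_0_if_site_stays_R:
  assumes "j \<in> sites N" and "\<And>n s. s \<in> set_pmf (chain p n (single_mutant i)) \<Longrightarrow> s j = R"
  shows "rho_site N p i = 0"
proof -
  have "measure_pmf.prob (chain p n (single_mutant i)) (all_M N) = 0" for n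
    using assms by (force simp: measure_pmf_zero_iff all_M_def)
  then show ?thesis
    by (simp add: rho_site_def)
qed

lemma pmf_chain_stay:
  assumes support: "\<And>n. set_pmf (chain p n s) \<subseteq> insert s A"
    and no_return: "\<And>t. t \<in> A \<Longrightarrow> pmf (step p t) s = 0"
  shows "pmf (chain p n s) s = pmf (step p s) s ^ n"
proof (induction n)
  case (Suc n)
  let ?q = "pmf (step p s) s"
  have "pmf (chain p (Suc n) s) s = (\<integral>t. pmf (step p t) s \<partial>measure_pmf (chain p n s))"
    by (simp add: pmf_bind)
  also have "\<dots> = (\<integral>t. ?q * indicator {s} t \<partial>measure_pmf (chain p n s))"
  proof (rule integral_cong_AE, simp_all, rule AE_pmfI)
    fix t
    assume "t \<in> set_pmf (chain p n s)"
    with support have "t = s \<or> t \<in> A"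
      by blast
    then show "pmf (step p t) s = ?q * indicator {s} t"
      using no_return by (cases "t = s") auto
  qed
  also have "\<dots> = ?q * pmf (chain p n s) s"
    by (simp add: measure_pmf_single)
  finally show ?case
    using Suc.IH by simp
qed simp

lemma rho_site_eq_1_if_absorbed_in_one_step:
  assumes closed: "\<And>ev t. ev \<in> set_pmf p \<Longrightarrow> t \<in> all_M N \<Longrightarrow> apply_event ev t \<in> all_M N"
    and one_step: "\<And>ev. ev \<in> set_pmf p \<Longrightarrow>
                      apply_event ev (single_mutant i) \<in> insert (single_mutant i) (all_M N)"
    and not_fixed: "single_mutant i \<notin> all_M N"
    and escapes: "pmf (step p (single_mutant i)) (single_mutant i) < 1"
  shows "rho_site N p i = 1"
proof -
  let ?s = "single_mutant i" and ?A = "all_M N"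
  let ?q = "pmf (step p ?s) ?s"
  have support: "set_pmf (chain p n ?s) \<subseteq> insert ?s ?A" for n
    by (rule set_pmf_chain_subset) (use closed one_step in blast)+
  have no_return: "pmf (step p t) ?s = 0" if "t \<in> ?A" for t
    using closed[OF _ that] not_fixed by (auto simp: step_def pmf_eq_0_set_pmf)
  have "measure_pmf.prob (chain p n ?s) ?A = 1 - ?q ^ n" for n
  proof -
    have "measure_pmf.prob (chain p n ?s) (?A \<union> {?s}) = 1"
      using support by (subst measure_pmf.prob_eq_1) (auto simp: AE_measure_pmf_iff)
    moreover have "measure_pmf.prob (chain p n ?s) (?A \<union> {?s}) =
                   measure_pmf.prob (chain p n ?s) ?A + pmf (chain p n ?s) ?s"
      using not_fixed by (subst measure_pmf.finite_measure_Union) (auto simp: measure_pmf_single)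
    ultimately show ?thesis
      using pmf_chain_stay[OF support no_return] by simp
  qed
  moreover have "(\<lambda>n. 1 - ?q ^ n) \<longlonglongrightarrow> 1 - 0"
    by (intro tendsto_intros LIMSEQ_power_zero) (use escapes in simp)
  ultimately show ?thesis
    unfolding rho_site_def by (simp add: limI)
qed

text \<open>The self-replacement of site 1 never changes the state, but it contributes
  \<open>e\<^sub>1\<^sub>1 = 1 - a\<close> to the death rate \<open>d\<^sub>1\<close>, which is the weight of the only site from which a
  mutant can fix.\<close>

definition sweep_event :: "nat \<Rightarrow> event" where
  "sweep_event N = ({2..N}, restrict (\<lambda>_. 1) {2..N})"

definition self_event :: event where
  "self_event = ({1}, restrict (\<lambda>_. 1) {1})"

definition sweep_rule :: "nat \<Rightarrow> real \<Rightarrow> event pmf" where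
  "sweep_rule N a = map_pmf (\<lambda>b. if b then sweep_event N else self_event) (bernoulli_pmf a)"

lemma set_pmf_sweep_rule: "set_pmf (sweep_rule N a) \<subseteq> {sweep_event N, self_event}"
  by (auto simp: sweep_rule_def)

lemma sweep_event_in_set_pmf:
  assumes "0 < a" "a \<le> 1"
  shows "sweep_event N \<in> set_pmf (sweep_rule N a)"
proof -
  have "True \<in> set_pmf (bernoulli_pmf a)"
    using assms by (simp add: set_pmf_iff)
  then show ?thesis
    by (force simp: sweep_rule_def)
qed

lemma prob_sweep_rule:
  assumes "0 \<le> a" "a \<le> 1"
  shows "measure_pmf.prob (sweep_rule N a) E =
           (if sweep_event N \<in> E then a else 0) + (if self_event \<in> E then 1 - a else 0)"
proof -
  let ?B = "{b. (if b then sweep_event N else self_event) \<in> E}"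
  have "measure_pmf.prob (sweep_rule N a) E = sum (pmf (bernoulli_pmf a)) ?B"
    by (simp add: sweep_rule_def vimage_def measure_measure_pmf_finite)
  also have "?B = (if sweep_event N \<in> E then {True} else {}) \<union> (if self_event \<in> E then {False} else {})"
    by auto
  finally show ?thesis
    using assms by (cases "sweep_event N \<in> E"; cases "self_event \<in> E") auto
qed

lemma e_weight_sweep_rule:
  assumes "0 \<le> a" "a \<le> 1"
  shows "e_weight (sweep_rule N a) i j =
           (if i = 1 \<and> j \<in> {2..N} then a else 0) + (if i = 1 \<and> j = 1 then 1 - a else 0)"
  using assms by (auto simp: e_weight_def prob_sweep_rule sweep_event_def self_event_def)

lemma sites_eq_insert_1: "N \<ge> 1 \<Longrightarrow> sites N = insert 1 {2..N}"
  by (auto simp: sites_def)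

lemma B_total_sweep_rule:
  assumes "0 \<le> a" "a \<le> 1" "N \<ge> 2"
  shows "B_total N (sweep_rule N a) = (1 - a) + (real N - 1) * a"
proof -
  have "B_total N (sweep_rule N a) = (\<Sum>j\<in>sites N. e_weight (sweep_rule N a) 1 j)"
    unfolding B_total_def using assms
    by (subst sites_eq_insert_1) (auto simp: e_weight_sweep_rule)
  also have "\<dots> = (1 - a) + (real N - 1) * a"
    using assms by (subst sites_eq_insert_1) (auto simp: e_weight_sweep_rule)
  finally show ?thesis .
qed

lemma d_death_1_sweep_rule:
  assumes "0 \<le> a" "a \<le> 1" "N \<ge> 2"
  shows "d_death N (sweep_rule N a) 1 = 1 - a"
  unfolding d_death_def using assms
  by (subst sites_eq_insert_1) (auto simp: e_weight_sweep_rule)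

lemma replacement_rule_sweep_rule:
  assumes "N \<ge> 2"
  shows "replacement_rule N (sweep_rule N a)"
proof -
  have "valid_event N ev" if "ev \<in> {sweep_event N, self_event}" for ev
    using that assms by (auto simp: valid_event_def sweep_event_def self_event_def sites_def)
  then show ?thesis
    unfolding replacement_rule_def using set_pmf_sweep_rule[of N a] by blast
qed

lemma apply_self_event: "apply_event self_event s = s"
  by (auto simp: apply_event_def self_event_def)

lemma apply_sweep_event: "apply_event (sweep_event N) s = (\<lambda>j. if j \<in> {2..N} then s 1 else s j)"
  by (auto simp: apply_event_def sweep_event_def)

lemma fixation_assumption_sweep_rule:
  assumes "0 < a" "a \<le> 1" "N \<ge> 2"
  shows "fixation_assumption N (sweep_rule N a)"
  unfolding fixation_assumption_def
proof (intro bexI[of _ 1] exI[of _ "[sweep_event N]"] conjI allI ballI)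
  show "set [sweep_event N] \<subseteq> set_pmf (sweep_rule N a)"
    using sweep_event_in_set_pmf[OF assms(1,2)] by simp
  show "fold apply_event [sweep_event N] s j = s 1" if "j \<in> sites N" for s j
    using that by (cases "j = 1") (auto simp: apply_sweep_event sites_def)
qed (use assms in \<open>auto simp: sites_def\<close>)

lemma rho_site_sweep_rule_other:
  assumes "i \<noteq> 1" "N \<ge> 2"
  shows "rho_site N (sweep_rule N a) i = 0"
proof (rule rho_site_eq_0_if_site_stays_R)
  show "1 \<in> sites N"
    using assms by (simp add: sites_def)
  have "set_pmf (chain (sweep_rule N a) n (single_mutant i)) \<subseteq> {s. s 1 = R}" for n
    using assms set_pmf_sweep_rule[of N a]
    by (intro set_pmf_chain_subset) (auto simp: single_mutant_def apply_self_event apply_sweep_event)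
  then show "s 1 = R" if "s \<in> set_pmf (chain (sweep_rule N a) n (single_mutant i))" for n s
    using that by blast
qed

lemma rho_site_sweep_rule_1:
  assumes "0 < a" "a \<le> 1" "N \<ge> 2"
  shows "rho_site N (sweep_rule N a) 1 = 1"
proof (rule rho_site_eq_1_if_absorbed_in_one_step)
  show "apply_event ev t \<in> all_M N" if "ev \<in> set_pmf (sweep_rule N a)" "t \<in> all_M N" for ev t
    using that set_pmf_sweep_rule[of N a]
    by (auto simp: all_M_def sites_def apply_self_event apply_sweep_event)
  have sweep: "apply_event (sweep_event N) (single_mutant 1) \<in> all_M N"
    by (auto simp: all_M_def sites_def apply_sweep_event single_mutant_def)
  then show "apply_event ev (single_mutant 1) \<in> insert (single_mutant 1) (all_M N)"
    if "ev \<in> set_pmf (sweep_rule N a)" for ev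
    using that set_pmf_sweep_rule[of N a] by (auto simp: apply_self_event)
  show not_fixed: "single_mutant 1 \<notin> all_M N"
    using assms by (auto simp: all_M_def sites_def single_mutant_def intro!: bexI[of _ 2])
  have "pmf (step (sweep_rule N a) (single_mutant 1)) (single_mutant 1) = 1 - a"
    using sweep not_fixed assms
    by (auto simp: step_def pmf_map prob_sweep_rule apply_self_event)
  then show "pmf (step (sweep_rule N a) (single_mutant 1)) (single_mutant 1) < 1"
    using assms by simp
qed

lemma rho_overall_sweep_rule:
  assumes "0 < a" "a \<le> 1" "N \<ge> 2"
  shows "rho_overall N (sweep_rule N a) = (1 - a) / ((1 - a) + (real N - 1) * a)"
proof -
  let ?p = "sweep_rule N a"
  have "(\<Sum>i\<in>sites N. d_death N ?p i * rho_site N ?p i)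
        = d_death N ?p 1 * rho_site N ?p 1 + (\<Sum>i\<in>{2..N}. d_death N ?p i * rho_site N ?p i)"
    using assms by (simp add: sites_eq_insert_1)
  also have "\<dots> = 1 - a"
    using assms d_death_1_sweep_rule[of a N] rho_site_sweep_rule_1[OF assms]
    by (simp add: rho_site_sweep_rule_other)
  finally show ?thesis
    using assms by (simp add: rho_overall_def B_total_sweep_rule)
qed

lemma rho_overall_attains:
  assumes "N \<ge> 2" "0 \<le> x" "x < 1"
  shows "\<exists>p. replacement_rule N p \<and> fixation_assumption N p \<and> rho_overall N p = x"
proof -
  define D where "D = 1 + (real N - 2) * x"
  define a where "a = (1 - x) / D"
  have "D \<ge> 1"
    using assms by (simp add: D_def)
  then have a: "0 < a" "a \<le> 1" and aD: "a * D = 1 - x"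
    using assms by (auto simp: a_def)
  have num: "(1 - a) * D = x * (real N - 1)"
    using aD by (simp add: D_def algebra_simps)
  have "((1 - a) + (real N - 1) * a) * D = D + (real N - 2) * (a * D)"
    by (simp add: algebra_simps)
  also have "\<dots> = real N - 1"
    unfolding aD by (simp add: D_def algebra_simps)
  finally have den: "((1 - a) + (real N - 1) * a) * D = real N - 1" .
  have "(1 - a) / ((1 - a) + (real N - 1) * a) = ((1 - a) * D) / (((1 - a) + (real N - 1) * a) * D)"
    using \<open>D \<ge> 1\<close> by simp
  also have "\<dots> = x"
    unfolding num den using assms by simp
  finally show ?thesis
    using a assms replacement_rule_sweep_rule fixation_assumption_sweep_rule rho_overall_sweep_rule
    by metis
qed

theorem mainTheorem4:
  fixes N :: nat and u :: real
  assumes "N \<ge> 2" and "u > 0"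
  shows "(\<forall>x::real. 0 \<le> x \<and> x < 1 \<longrightarrow>
            (\<exists>p. replacement_rule N p \<and> fixation_assumption N p \<and> rho_overall N p = x))
       \<and> (\<forall>K::real. 0 \<le> K \<and> K < real N * u \<longrightarrow>
            (\<exists>p. replacement_rule N p \<and> fixation_assumption N p \<and>
                 real N * u * rho_overall N p = K))"
proof (intro conjI allI impI)
  show "\<exists>p. replacement_rule N p \<and> fixation_assumption N p \<and> rho_overall N p = x"
    if "0 \<le> x \<and> x < 1" for x
    using that assms(1) rho_overall_attains by blast
next
  fix K :: real
  assume K: "0 \<le> K \<and> K < real N * u"
  have Nu: "real N * u > 0"
    using assms by simp
  then obtain p where "replacement_rule N p" "fixation_assumption N p"
      and "rho_overall N p = K / (real N * u)"
    using K assms(1) rho_overall_attains[of N "K / (real N * u)"] by (auto simp: field_simps)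
  moreover have "real N * u * (K / (real N * u)) = K"
    using Nu by (metis less_irrefl nonzero_mult_div_cancel_left times_divide_eq_right)
  ultimately show "\<exists>p. replacement_rule N p \<and> fixation_assumption N p \<and> real N * u * rho_overall N p = K"
    by metis
qed

end
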